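(* Let $\Omega\subset\mathbb{R}^N$ ($N\geq 2$) be a bounded Lipschitz open set and fix $s_0\in[1/2,1)$. Then $\limsup_{s\searrow s_0}S_{N,s}(\Omega)\leq S_{N,s_0}(\Omega)$.
   Context: For $s\in(0,1)$: $c_{N,s}$ is the standard normalization constant of the fractional Laplacian on $\mathbb{R}^N$, $2^*_s=\frac{2N}{N-2s}$, $Q_{N,s,\Omega}(u)=\frac{c_{N,s}}{2}\int_\Omega\int_\Omega\frac{(u(x)-u(y))^2}{|x-y|^{N+2s}}dxdy$, $H^s_0(\Omega)$ is the completion of $C^\infty_c(\Omega)$ in the norm $(\|u\|^2_{L^2(\Omega)}+Q_{N,s,\Omega}(u))^{1/2}$, and $S_{N,s}(\Omega)=\inf_{u\in H^s_0(\Omega),u\neq0}\frac{Q_{N,s,\Omega}(u)}{\|u\|^2_{L^{2^*_s}(\Omega)}}$. Lipschitz open set: each boundary point has a neighbourhood described by a bi-Lipschitz map from a cylinder $B_r\times(-r,r)$ ($B_r$ an $(N-1)$-ball) sending the upper half into $\Omega$ and the flat part into $\partial\Omega$. *)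

theory Defs
  imports "HOL-Analysis.Analysis"
begin

fun iter_pd :: "'a::euclidean_space list \<Rightarrow> ('a \<Rightarrow> real) \<Rightarrow> ('a \<Rightarrow> real)" where
  "iter_pd [] f = f"
| "iter_pd (b # bs) f = (\<lambda>x. deriv (\<lambda>t. iter_pd bs f (x + t *\<^sub>R b)) 0)"

definition smooth_fun :: "('a::euclidean_space \<Rightarrow> real) \<Rightarrow> bool" where
  "smooth_fun f \<longleftrightarrow>
     (\<forall>bs. set bs \<subseteq> Basis \<longrightarrow>
        continuous_on UNIV (iter_pd bs f) \<and>
        (\<forall>b\<in>Basis. \<forall>x. (\<lambda>t. iter_pd bs f (x + t *\<^sub>R b)) differentiable (at 0)))"

definition Cc_inf :: "'a::euclidean_space set \<Rightarrow> ('a \<Rightarrow> real) \<Rightarrow> bool" where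
  "Cc_inf \<Omega> f \<longleftrightarrow> smooth_fun f \<and> compact (closure {x. f x \<noteq> 0}) \<and> closure {x. f x \<noteq> 0} \<subseteq> \<Omega>"

definition c_const :: "nat \<Rightarrow> real \<Rightarrow> real" where
  "c_const N s = s * 2 powr (2 * s) * Gamma ((real N + 2 * s) / 2) / (pi powr (real N / 2) * Gamma (1 - s))"

definition crit_exp :: "nat \<Rightarrow> real \<Rightarrow> real" where
  "crit_exp N s = 2 * real N / (real N - 2 * s)"

definition Qform :: "real \<Rightarrow> 'a::euclidean_space set \<Rightarrow> ('a \<Rightarrow> real) \<Rightarrow> ennreal" where
  "Qform s \<Omega> u = ennreal (c_const DIM('a) s / 2) *
     (\<integral>\<^sup>+ x. (\<integral>\<^sup>+ y. ennreal ((u x - u y)\<^sup>2 / norm (x - y) powr (real DIM('a) + 2 * s))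
        * indicator \<Omega> y \<partial>lebesgue) * indicator \<Omega> x \<partial>lebesgue)"

definition Hs0 :: "real \<Rightarrow> 'a::euclidean_space set \<Rightarrow> ('a \<Rightarrow> real) set" where
  "Hs0 s \<Omega> = {u. u \<in> borel_measurable lebesgue \<and>
     (\<exists>\<phi>. (\<forall>n. Cc_inf \<Omega> (\<phi> n)) \<and>
        ((\<lambda>n. (\<integral>\<^sup>+ x. ennreal ((\<phi> n x - u x)\<^sup>2) * indicator \<Omega> x \<partial>lebesgue)
              + Qform s \<Omega> (\<lambda>x. \<phi> n x - u x)) \<longlonglongrightarrow> 0))}"

definition Lp_norm_sq :: "real \<Rightarrow> 'a::euclidean_space set \<Rightarrow> ('a \<Rightarrow> real) \<Rightarrow> real" where
  "Lp_norm_sq p \<Omega> u = (enn2real (\<integral>\<^sup>+ x. ennreal (\<bar>u x\<bar> powr p) * indicator \<Omega> x \<partial>lebesgue)) powr (2 / p)"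

definition S_const :: "real \<Rightarrow> 'a::euclidean_space set \<Rightarrow> ennreal" where
  "S_const s \<Omega> = (INF u \<in> {u \<in> Hs0 s \<Omega>. \<not> (AE x in lebesgue. x \<in> \<Omega> \<longrightarrow> u x = 0)}.
       Qform s \<Omega> u / ennreal (Lp_norm_sq (crit_exp DIM('a) s) \<Omega> u))"

(* fixed splitting R^N = R^{N-1} x R along the basis vector e_N *)
definition eN :: "'a::euclidean_space" where
  "eN = (SOME b. b \<in> (Basis :: 'a set))"

definition cylinder :: "real \<Rightarrow> 'a::euclidean_space set" where
  "cylinder r = {y::'a. norm (y - (y \<bullet> eN) *\<^sub>R eN) < r \<and> \<bar>y \<bullet> eN\<bar> < r}"

definition lipschitz_open_set :: "'a::euclidean_space set \<Rightarrow> bool" where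
  "lipschitz_open_set \<Omega> \<longleftrightarrow> open \<Omega> \<and>
    (\<forall>p \<in> frontier \<Omega>. \<exists>r (T :: 'a \<Rightarrow> 'a) L. r > 0 \<and>
       inj_on T (cylinder r) \<and>
       L-lipschitz_on (cylinder r) T \<and>
       L-lipschitz_on (T ` cylinder r) (inv_into (cylinder r) T) \<and>
       open (T ` cylinder r) \<and> p \<in> T ` cylinder r \<and>
       T ` (cylinder r \<inter> {y. y \<bullet> eN > 0}) = T ` cylinder r \<inter> \<Omega> \<and>
       T ` (cylinder r \<inter> {y. y \<bullet> eN = 0}) = T ` cylinder r \<inter> frontier \<Omega>)"

end

(*
  Fix a test function phi in C_c^infinity(Omega). Being Lipschitz, phi makes the Gagliardo
  integrand (phi x - phi y)^2 / |x - y|^(N+2s) dominated, uniformly for s in [s0, s1] with s1 < 1,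
  by L^2 (|x - y|^(-(N-2+2 s1)) + 1), which is integrable over the bounded set Omega (dyadic shells
  around x). By dominated convergence, and continuity of c_{N,s} and 2^*_s, the Rayleigh quotient
  R_s(phi) = Q_{N,s,Omega}(phi) / |phi|^2_{2^*_s} is right continuous at s0, so
  limsup_{s -> s0+} S_{N,s}(Omega) <= R_{s0}(phi).

  A nontrivial u in H^{s0}_0(Omega) is the limit of test functions phi_n with
  Q(phi_n - u) -> 0 and phi_n -> u in L^2, hence a.e. along a subsequence. Then
  Q(phi_n) <= (1 + d) Q(u) + (1 + 1/d) Q(phi_n - u), while Fatou's lemma keeps the L^{2^*_s0}
  norms from dropping in the limit; so the bound passes from R_{s0}(phi_n) to R_{s0}(u), and the
  infimum over u is S_{N,s0}(Omega).
*)

theory Submission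
  imports Defs
begin

section \<open>Nonnegative extended reals and their integrals\<close>

lemma ennreal_le_suminf: "f k \<le> (\<Sum>i. f i :: ennreal)"
proof -
  have "sum f {k} \<le> suminf f"
    by (rule sum_le_suminf) auto
  then show ?thesis by simp
qed

lemma ennreal_le_divide_iff: "b \<noteq> 0 \<Longrightarrow> b < top \<Longrightarrow> c \<le> a / b \<longleftrightarrow> c * b \<le> (a::ennreal)"
  using divide_less_ennreal[of b a c] by (simp add: not_less[symmetric])

lemma ennreal_le_of_le_mult_add:
  fixes x q :: ennreal
  assumes "\<And>\<delta>. 0 < \<delta> \<Longrightarrow> x \<le> ennreal (1 + \<delta>) * q + ennreal \<delta>"
  shows "x \<le> q"
proof (rule ennreal_le_epsilon)
  fix \<epsilon> :: real assume "q < top" "0 < \<epsilon>"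
  then obtain r where r: "q = ennreal r" "0 \<le> r"
    using less_top_ennreal by blast
  define \<delta> where "\<delta> = \<epsilon> / (r + 1)"
  have "0 < \<delta>" "\<delta> * (r + 1) = \<epsilon>"
    using r \<open>0 < \<epsilon>\<close> by (auto simp: \<delta>_def)
  then have "(1 + \<delta>) * r + \<delta> = r + \<epsilon>"
    by (simp add: algebra_simps)
  have "ennreal (1 + \<delta>) * q + ennreal \<delta> = ennreal ((1 + \<delta>) * r) + ennreal \<delta>"
    using \<open>0 < \<delta>\<close> by (simp add: r ennreal_mult')
  also have "\<dots> = ennreal (r + \<epsilon>)"
    using r \<open>0 < \<delta>\<close> \<open>(1 + \<delta>) * r + \<delta> = r + \<epsilon>\<close> by (simp flip: ennreal_plus)
  also have "\<dots> = q + ennreal \<epsilon>"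
    using r \<open>0 < \<epsilon>\<close> by (simp add: ennreal_plus)
  finally have "ennreal (1 + \<delta>) * q + ennreal \<delta> = q + ennreal \<epsilon>" .
  then show "x \<le> q + ennreal \<epsilon>"
    using assms[OF \<open>0 < \<delta>\<close>] by simp
qed

lemma ennreal_mult_powr_le_of_less:
  fixes m q :: ennreal and a e :: real
  assumes "0 < a" "\<And>Y. 0 < Y \<Longrightarrow> Y < a \<Longrightarrow> m * ennreal (Y powr e) \<le> q"
  shows "m * ennreal (a powr e) \<le> q"
proof -
  have "((\<lambda>Y. m * ennreal (Y powr e)) \<longlongrightarrow> m * ennreal (a powr e)) (at_left a)"
    using assms(1)
    by (intro tendsto_mult_ennreal tendsto_const tendsto_ennrealI tendsto_powr tendsto_ident_at) auto
  moreover have "\<forall>\<^sub>F Y in at_left a. m * ennreal (Y powr e) \<le> q"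
    using assms by (intro eventually_at_leftI[of 0 a]) auto
  ultimately show ?thesis
    by (rule tendsto_le[OF trivial_limit_at_left_real tendsto_const])
qed

lemma nn_integral_le_lincomb:
  assumes [measurable]: "g \<in> borel_measurable M" "h \<in> borel_measurable M"
    and le: "\<And>x. f x \<le> a * g x + b * h x"
  shows "(\<integral>\<^sup>+x. f x \<partial>M) \<le> a * (\<integral>\<^sup>+x. g x \<partial>M) + b * (\<integral>\<^sup>+x. h x \<partial>M)"
proof -
  have "(\<integral>\<^sup>+x. f x \<partial>M) \<le> (\<integral>\<^sup>+x. a * g x + b * h x \<partial>M)"
    by (intro nn_integral_mono le)
  also have "\<dots> = a * (\<integral>\<^sup>+x. g x \<partial>M) + b * (\<integral>\<^sup>+x. h x \<partial>M)"
    by (simp add: nn_integral_add nn_integral_cmult)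
  finally show ?thesis .
qed

lemma nn_integral_dominated_convergence_at:
  fixes f :: "'b::first_countable_topology \<Rightarrow> 'a \<Rightarrow> ennreal"
  assumes [measurable]: "\<And>t. f t \<in> borel_measurable M" "g \<in> borel_measurable M" "w \<in> borel_measurable M"
    and bound: "\<forall>\<^sub>F t in at t0 within T. AE x in M. f t x \<le> w x"
    and w: "(\<integral>\<^sup>+x. w x \<partial>M) < \<infinity>"
    and lim: "AE x in M. ((\<lambda>t. f t x) \<longlongrightarrow> g x) (at t0 within T)"
  shows "((\<lambda>t. \<integral>\<^sup>+x. f t x \<partial>M) \<longlongrightarrow> (\<integral>\<^sup>+x. g x \<partial>M)) (at t0 within T)"
  unfolding tendsto_at_iff_sequentially comp_def
proof (intro allI impI)
  fix X assume "\<forall>i. X i \<in> T - {t0}" "X \<longlonglongrightarrow> t0"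
  then have X: "filterlim X (at t0 within T) sequentially"
    by (auto simp: filterlim_at)
  obtain N where N: "\<And>n. n \<ge> N \<Longrightarrow> AE x in M. f (X n) x \<le> w x"
    using filterlim_iff[THEN iffD1, OF X, rule_format, OF bound] by (auto simp: eventually_sequentially)
  have "(\<lambda>n. \<integral>\<^sup>+x. f (X (n + N)) x \<partial>M) \<longlonglongrightarrow> (\<integral>\<^sup>+x. g x \<partial>M)"
  proof (rule nn_integral_dominated_convergence[OF _ _ _ N w])
    show "AE x in M. (\<lambda>n. f (X (n + N)) x) \<longlonglongrightarrow> g x"
      using lim by eventually_elim (rule LIMSEQ_ignore_initial_segment, rule filterlim_compose[OF _ X])
  qed auto
  then show "(\<lambda>n. \<integral>\<^sup>+x. f (X n) x \<partial>M) \<longlonglongrightarrow> (\<integral>\<^sup>+x. g x \<partial>M)"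
    by (rule LIMSEQ_offset)
qed

lemma nn_integral_tendsto_0_AE_subseq:
  fixes g :: "nat \<Rightarrow> 'a \<Rightarrow> real"
  assumes [measurable]: "\<And>n. g n \<in> borel_measurable M" and nonneg: "\<And>n x. 0 \<le> g n x"
    and lim: "(\<lambda>n. \<integral>\<^sup>+x. ennreal (g n x) \<partial>M) \<longlonglongrightarrow> 0"
  shows "\<exists>r. strict_mono r \<and> (AE x in M. (\<lambda>n. g (r n) x) \<longlonglongrightarrow> 0)"
proof -
  obtain N where N: "\<And>n. n \<ge> N \<Longrightarrow> (\<integral>\<^sup>+x. ennreal (g n x) \<partial>M) < 1"
    using order_tendstoD(2)[OF lim, of 1] by (auto simp: eventually_sequentially)
  have int: "integrable M (g (n + N))" for n
    using N[of "n + N"] nonneg by (intro integrableI_nonneg) (auto simp: order_less_trans)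
  have "(\<lambda>n. \<integral>\<^sup>+x. ennreal (g (n + N) x) \<partial>M) \<longlonglongrightarrow> ennreal 0"
    using LIMSEQ_ignore_initial_segment[OF lim, of N] by simp
  then have "(\<lambda>n. enn2real (\<integral>\<^sup>+x. ennreal (g (n + N) x) \<partial>M)) \<longlonglongrightarrow> 0"
    by (rule tendsto_enn2real) simp
  then have "(\<lambda>n. \<integral>x. norm (g (n + N) x) \<partial>M) \<longlonglongrightarrow> 0"
    using nonneg by (simp add: integral_eq_nn_integral)
  then have "\<exists>r. strict_mono r \<and> (AE x in M. (\<lambda>n. g (r n + N) x) \<longlonglongrightarrow> 0)"
    using int by (intro tendsto_L1_AE_subseq[where u = "\<lambda>n. g (n + N)"]) auto
  then obtain r where "strict_mono r" "AE x in M. (\<lambda>n. g (r n + N) x) \<longlonglongrightarrow> 0"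
    by blast
  moreover have "strict_mono (\<lambda>n. r n + N)"
    using \<open>strict_mono r\<close> by (simp add: strict_mono_def)
  ultimately show ?thesis by blast
qed

lemma L2_tendsto_imp_AE_subseq:
  fixes f :: "nat \<Rightarrow> 'a \<Rightarrow> real"
  assumes [measurable]: "\<And>n. f n \<in> borel_measurable M" "u \<in> borel_measurable M" "\<Omega> \<in> sets M"
    and lim: "(\<lambda>n. \<integral>\<^sup>+x. ennreal ((f n x - u x)\<^sup>2) * indicator \<Omega> x \<partial>M) \<longlonglongrightarrow> 0"
  shows "\<exists>r. strict_mono r \<and> (AE x in M. x \<in> \<Omega> \<longrightarrow> (\<lambda>n. f (r n) x) \<longlonglongrightarrow> u x)"
proof -
  have "\<exists>r. strict_mono r \<and> (AE x in M. (\<lambda>n. (f (r n) x - u x)\<^sup>2 * indicator \<Omega> x) \<longlonglongrightarrow> 0)"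
    using lim by (intro nn_integral_tendsto_0_AE_subseq) (auto simp: ennreal_mult'' ennreal_indicator)
  then obtain r where r: "strict_mono r" "AE x in M. (\<lambda>n. (f (r n) x - u x)\<^sup>2 * indicator \<Omega> x) \<longlonglongrightarrow> 0"
    by blast
  have "AE x in M. x \<in> \<Omega> \<longrightarrow> (\<lambda>n. f (r n) x) \<longlonglongrightarrow> u x"
    using r(2)
  proof eventually_elim
    case (elim x)
    show ?case
    proof
      assume "x \<in> \<Omega>"
      then have "(\<lambda>n. sqrt ((f (r n) x - u x)\<^sup>2)) \<longlonglongrightarrow> sqrt 0"
        using elim by (intro tendsto_real_sqrt) simp
      then have "(\<lambda>n. f (r n) x - u x) \<longlonglongrightarrow> 0"
        by (simp add: tendsto_rabs_zero_iff)
      then show "(\<lambda>n. f (r n) x) \<longlonglongrightarrow> u x"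
        by (rule LIM_zero_cancel)
    qed
  qed
  with r(1) show ?thesis by blast
qed

section \<open>A singular integral\<close>

lemma norm_powr_le_dyadic_shells:
  fixes x y :: "'a::euclidean_space" and \<alpha> R :: real
  assumes "0 \<le> \<alpha>" "0 < R"
  shows "ennreal (norm (x - y) powr - \<alpha>) * indicator (ball x R) y
    \<le> (\<Sum>k. ennreal ((R / 2 ^ Suc k) powr - \<alpha>) * indicator (cball x (R / 2 ^ k)) y)"
proof (cases "y \<in> ball x R \<and> y \<noteq> x")
  case True
  define d where "d = dist x y"
  have d: "0 < d" "d < R" using True by (auto simp: d_def)
  define k where "k = nat \<lfloor>log 2 (R / d)\<rfloor>"
  have "2 powr k \<le> R / d" "R / d < 2 powr (k + 1)"
    using d floor_log_eq_powr_iff[of "R / d" 2 "\<lfloor>log 2 (R / d)\<rfloor>"]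
    by (auto simp: k_def add.commute)
  then have k: "R / 2 ^ Suc k < d" "d \<le> R / 2 ^ k"
    using d by (auto simp: powr_realpow powr_add field_simps)
  have "ennreal (norm (x - y) powr - \<alpha>) * indicator (ball x R) y = ennreal (d powr - \<alpha>)"
    using True by (simp add: d_def dist_norm)
  also have "\<dots> \<le> ennreal ((R / 2 ^ Suc k) powr - \<alpha>) * indicator (cball x (R / 2 ^ k)) y"
    using k assms by (simp add: d_def powr_mono2')
  also have "\<dots> \<le> (\<Sum>k. ennreal ((R / 2 ^ Suc k) powr - \<alpha>) * indicator (cball x (R / 2 ^ k)) y)"
    by (rule ennreal_le_suminf)
  finally show ?thesis .
qed auto

lemma nn_integral_norm_powr_ball_le:
  fixes x :: "'a::euclidean_space" and \<alpha> R :: real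
  assumes "0 \<le> \<alpha>" "\<alpha> < DIM('a)" "0 < R"
  defines "q \<equiv> 2 powr \<alpha> / 2 ^ DIM('a)"
  shows "(\<integral>\<^sup>+y. ennreal (norm (x - y) powr - \<alpha>) * indicator (ball x R) y \<partial>lborel)
    \<le> ennreal ((R / 2) powr - \<alpha> * unit_ball_vol DIM('a) * R ^ DIM('a) / (1 - q))"
proof -
  define C where "C = (R / 2) powr - \<alpha> * unit_ball_vol DIM('a) * R ^ DIM('a)"
  have q: "0 < q" "q < 1"
    using assms by (auto simp: q_def powr_realpow[symmetric] powr_less_mono)
  have shell_term: "(R / 2 ^ Suc k) powr - \<alpha> * (unit_ball_vol DIM('a) * (R / 2 ^ k) ^ DIM('a)) = C * q ^ k"
    for k
  proof -
    have "(R / 2 ^ Suc k) powr - \<alpha> = (R / 2) powr - \<alpha> * (2 powr \<alpha>) ^ k"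
      using assms by (simp add: powr_divide powr_minus_divide powr_realpow[symmetric] powr_powr
          divide_simps powr_mult_base mult.commute ring_distribs flip: powr_add powr_realpow)
    then show ?thesis
      by (simp add: C_def q_def power_divide power_mult_distrib field_simps mult.commute
          flip: power_mult)
  qed
  have "(\<integral>\<^sup>+y. ennreal (norm (x - y) powr - \<alpha>) * indicator (ball x R) y \<partial>lborel)
      \<le> (\<integral>\<^sup>+y. (\<Sum>k. ennreal ((R / 2 ^ Suc k) powr - \<alpha>) * indicator (cball x (R / 2 ^ k)) y) \<partial>lborel)"
    by (intro nn_integral_mono norm_powr_le_dyadic_shells assms(1,3))
  also have "\<dots> = (\<Sum>k. \<integral>\<^sup>+y. ennreal ((R / 2 ^ Suc k) powr - \<alpha>) * indicator (cball x (R / 2 ^ k)) y \<partial>lborel)"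
    by (intro nn_integral_suminf borel_measurable_times_ennreal borel_measurable_indicator) auto
  also have "\<dots> = (\<Sum>k. ennreal (C * q ^ k))"
  proof (rule suminf_cong)
    fix k
    have "(\<integral>\<^sup>+y. ennreal ((R / 2 ^ Suc k) powr - \<alpha>) * indicator (cball x (R / 2 ^ k)) y \<partial>lborel)
        = ennreal ((R / 2 ^ Suc k) powr - \<alpha>) * emeasure lborel (cball x (R / 2 ^ k))"
      by (rule nn_integral_cmult_indicator) simp
    also have "\<dots> = ennreal ((R / 2 ^ Suc k) powr - \<alpha>) * ennreal (unit_ball_vol DIM('a) * (R / 2 ^ k) ^ DIM('a))"
      using assms(3) by (simp add: emeasure_cball)
    also have "\<dots> = ennreal (C * q ^ k)"
      unfolding shell_term[symmetric] by (rule ennreal_mult'[symmetric]) simp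
    finally show "(\<integral>\<^sup>+y. ennreal ((R / 2 ^ Suc k) powr - \<alpha>) * indicator (cball x (R / 2 ^ k)) y \<partial>lborel)
        = ennreal (C * q ^ k)" .
  qed
  also have "\<dots> = ennreal (C / (1 - q))"
  proof -
    have "(\<lambda>k. C * q ^ k) sums (C / (1 - q))"
      using q sums_mult[OF geometric_sums, of q C] by simp
    then have "(\<lambda>k. ennreal (C * q ^ k)) sums ennreal (C / (1 - q))"
      using q assms(3) by (subst sums_ennreal) (auto simp: C_def)
    then show ?thesis by (rule sums_unique[symmetric])
  qed
  finally show ?thesis by (simp add: C_def)
qed

lemma sets_borel_ball [measurable]: "ball x r \<in> sets borel"
  by simp

lemma nn_integral_singular_kernel_bounded:
  fixes \<Omega> :: "'a::euclidean_space set" and \<alpha> :: real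
  assumes "bounded \<Omega>" and [measurable]: "\<Omega> \<in> sets borel" and "0 \<le> \<alpha>" "\<alpha> < DIM('a)"
  shows "\<exists>C. \<forall>x\<in>\<Omega>. (\<integral>\<^sup>+y. ennreal (norm (x - y) powr - \<alpha> + 1) * indicator \<Omega> y \<partial>lborel) \<le> ennreal C"
proof -
  obtain b where b: "b > 0" "\<And>x. x \<in> \<Omega> \<Longrightarrow> norm x \<le> b"
    using assms(1) bounded_pos by blast
  define D where "D = 2 * b + 1"
  have D_pos: "0 < D" using b by (simp add: D_def)
  have in_ball: "y \<in> ball x D" if "x \<in> \<Omega>" "y \<in> \<Omega>" for x y
  proof -
    have "dist x y \<le> norm x + norm y" by (simp add: dist_norm norm_triangle_ineq4)
    then show ?thesis using b(2)[OF that(1)] b(2)[OF that(2)] by (simp add: D_def)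
  qed
  obtain G where G: "\<And>x::'a. (\<integral>\<^sup>+y. ennreal (norm (x - y) powr - \<alpha>) * indicator (ball x D) y \<partial>lborel)
      \<le> ennreal G"
    using nn_integral_norm_powr_ball_le[OF assms(3,4) D_pos] by blast
  have "(\<integral>\<^sup>+y. ennreal (norm (x - y) powr - \<alpha> + 1) * indicator \<Omega> y \<partial>lborel)
      \<le> ennreal (max G 0 + measure lborel \<Omega>)" if "x \<in> \<Omega>" for x
  proof -
    have "(\<integral>\<^sup>+y. ennreal (norm (x - y) powr - \<alpha> + 1) * indicator \<Omega> y \<partial>lborel)
        \<le> 1 * (\<integral>\<^sup>+y. ennreal (norm (x - y) powr - \<alpha>) * indicator (ball x D) y \<partial>lborel)
          + 1 * (\<integral>\<^sup>+y. indicator \<Omega> y \<partial>lborel)"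
      by (rule nn_integral_le_lincomb; measurable?)
         (use in_ball[OF that] in \<open>auto simp: indicator_def ennreal_plus\<close>)
    also have "\<dots> \<le> ennreal G + emeasure lborel \<Omega>"
      using G[of x] assms(2) by simp
    also have "\<dots> \<le> ennreal (max G 0) + emeasure lborel \<Omega>"
      by (intro add_mono ennreal_leI) auto
    also have "\<dots> = ennreal (max G 0 + measure lborel \<Omega>)"
      using emeasure_bounded_finite[OF assms(1)]
      by (simp add: emeasure_eq_ennreal_measure ennreal_plus)
    finally show ?thesis .
  qed
  then show ?thesis by blast
qed

section \<open>Smooth compactly supported functions\<close>

lemma smooth_fun_iter_pd_continuous:
  "smooth_fun f \<Longrightarrow> set bs \<subseteq> Basis \<Longrightarrow> continuous_on UNIV (iter_pd bs f)"
  unfolding smooth_fun_def by blast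

lemma smooth_fun_continuous: "smooth_fun f \<Longrightarrow> continuous_on UNIV f"
  using smooth_fun_iter_pd_continuous[of f "[]"] by simp

lemma smooth_fun_differentiable_line:
  "smooth_fun f \<Longrightarrow> b \<in> Basis \<Longrightarrow> (\<lambda>t. f (x + t *\<^sub>R b)) differentiable (at 0)"
  unfolding smooth_fun_def by (auto dest!: spec[of _ "[]"])

lemma smooth_fun_has_derivative_line:
  assumes "smooth_fun f" "b \<in> Basis"
  shows "((\<lambda>t. f (z + t *\<^sub>R b)) has_real_derivative iter_pd [b] f (z + t *\<^sub>R b)) (at t)"
proof -
  define w where "w = z + t *\<^sub>R b"
  have "(\<lambda>h. f (w + h *\<^sub>R b)) differentiable (at 0)"
    using assms by (rule smooth_fun_differentiable_line)
  then have "((\<lambda>h. f (w + h *\<^sub>R b)) has_real_derivative iter_pd [b] f w) (at (t + - t))"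
    by (simp add: DERIV_deriv_iff_real_differentiable)
  then have "((\<lambda>h. f (w + (h - t) *\<^sub>R b)) has_real_derivative iter_pd [b] f w) (at t)"
    by (subst (asm) DERIV_shift) simp
  moreover have "(\<lambda>h. f (w + (h - t) *\<^sub>R b)) = (\<lambda>h. f (z + h *\<^sub>R b))"
    by (simp add: w_def algebra_simps)
  ultimately show ?thesis by (simp add: w_def)
qed

lemma iter_pd_eq_0_outside:
  assumes "open U" "z \<in> U" "\<And>x. x \<in> U \<Longrightarrow> f x = 0" "b \<in> Basis"
  shows "iter_pd [b] f z = 0"
proof -
  obtain e where e: "e > 0" "ball z e \<subseteq> U"
    using assms openE by blast
  have "\<forall>\<^sub>F t in nhds 0. f (z + t *\<^sub>R b) = 0"
    unfolding eventually_nhds_metric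
    using e assms(3,4) by (intro exI[of _ e]) (auto simp: dist_norm subset_iff)
  then have "deriv (\<lambda>t. f (z + t *\<^sub>R b)) 0 = deriv (\<lambda>_. 0) 0"
    by (rule deriv_cong_ev) simp
  then show ?thesis by simp
qed

lemma continuous_compact_support_bounded:
  fixes g :: "'a::topological_space \<Rightarrow> real"
  assumes "continuous_on UNIV g" "compact K" "\<And>x. x \<notin> K \<Longrightarrow> g x = 0"
  shows "\<exists>M. \<forall>x. \<bar>g x\<bar> \<le> M"
proof -
  have "continuous_on K g"
    using assms(1) by (rule continuous_on_subset) simp
  then have "bounded (g ` K)"
    using assms(2) by (intro compact_imp_bounded compact_continuous_image)
  then obtain B where B: "\<And>y. y \<in> g ` K \<Longrightarrow> norm y \<le> B"
    by (auto simp: bounded_iff)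
  have "\<bar>g x\<bar> \<le> max B 0" for x
  proof (cases "x \<in> K")
    case True
    then show ?thesis using B[of "g x"] by simp
  next
    case False
    then show ?thesis using assms(3) by simp
  qed
  then show ?thesis by blast
qed

lemma Cc_inf_support:
  assumes "Cc_inf \<Omega> f"
  shows "compact (closure {x. f x \<noteq> 0})" "\<And>x. x \<notin> closure {x. f x \<noteq> 0} \<Longrightarrow> f x = 0"
  using assms closure_subset[of "{x. f x \<noteq> 0}"] unfolding Cc_inf_def by auto

lemma Cc_inf_continuous: "Cc_inf \<Omega> f \<Longrightarrow> continuous_on UNIV f"
  unfolding Cc_inf_def by (blast intro: smooth_fun_continuous)

lemma Cc_inf_borel_measurable: "Cc_inf \<Omega> f \<Longrightarrow> f \<in> borel_measurable borel"
  by (rule borel_measurable_continuous_onI[OF Cc_inf_continuous])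

lemma Cc_inf_borel_measurable_lebesgue: "Cc_inf \<Omega> \<phi> \<Longrightarrow> \<phi> \<in> borel_measurable lebesgue"
  by (intro measurable_completion) (simp add: Cc_inf_borel_measurable)

lemma Cc_inf_bounded: "Cc_inf \<Omega> f \<Longrightarrow> \<exists>M. \<forall>x. \<bar>f x\<bar> \<le> M"
  by (rule continuous_compact_support_bounded[OF Cc_inf_continuous Cc_inf_support(1,2)])

lemma Cc_inf_partials_bounded:
  assumes "Cc_inf \<Omega> f"
  shows "\<exists>M. \<forall>b\<in>Basis. \<forall>z. \<bar>iter_pd [b] f z\<bar> \<le> M"
proof -
  define K where "K = closure {x. f x \<noteq> 0}"
  note K = Cc_inf_support[OF assms, folded K_def]
  have "iter_pd [b] f z = 0" if "b \<in> Basis" "z \<notin> K" for b z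
    using that K compact_imp_closed[OF K(1)] by (intro iter_pd_eq_0_outside[of "- K"]) auto
  then have "(\<Sum>b\<in>Basis. \<bar>iter_pd [b] f z\<bar>) = 0" if "z \<notin> K" for z
    using that by simp
  moreover have "continuous_on UNIV (\<lambda>z. \<Sum>b\<in>Basis. \<bar>iter_pd [b] f z\<bar>)"
    using assms unfolding Cc_inf_def
    by (intro continuous_on_sum continuous_on_rabs smooth_fun_iter_pd_continuous) auto
  ultimately have "\<exists>M. \<forall>z. \<bar>\<Sum>b\<in>Basis. \<bar>iter_pd [b] f z\<bar>\<bar> \<le> M"
    by (intro continuous_compact_support_bounded[OF _ K(1)])
  then obtain M where M: "\<And>z. \<bar>\<Sum>b\<in>Basis. \<bar>iter_pd [b] f z\<bar>\<bar> \<le> M"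
    by blast
  have "\<bar>iter_pd [b] f z\<bar> \<le> M" if "b \<in> Basis" for b z
  proof -
    have "\<bar>iter_pd [b] f z\<bar> \<le> (\<Sum>b\<in>Basis. \<bar>iter_pd [b] f z\<bar>)"
      using that by (intro member_le_sum) auto
    then show ?thesis using M[of z] by linarith
  qed
  then show ?thesis by blast
qed

lemma smooth_fun_lipschitz_along_basis_sum:
  assumes "smooth_fun f" "\<forall>b\<in>Basis. \<forall>z. \<bar>iter_pd [b] f z\<bar> \<le> M" "B \<subseteq> Basis"
  shows "\<bar>f (z + (\<Sum>b\<in>B. c b *\<^sub>R b)) - f z\<bar> \<le> M * (\<Sum>b\<in>B. \<bar>c b\<bar>)"
  using finite_subset[OF assms(3) finite_Basis] assms(3)
proof (induction B rule: finite_induct)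
  case (insert b B)
  define z' where "z' = z + (\<Sum>b\<in>B. c b *\<^sub>R b)"
  have line: "norm (f (z' + c b *\<^sub>R b) - f (z' + 0 *\<^sub>R b)) \<le> M * norm (c b - 0)"
    by (rule field_differentiable_bound[where f = "\<lambda>t. f (z' + t *\<^sub>R b)" and S = UNIV
          and f' = "\<lambda>t. iter_pd [b] f (z' + t *\<^sub>R b)"])
       (use smooth_fun_has_derivative_line[OF assms(1)] assms(2) insert.prems in auto)
  have "z + (\<Sum>b\<in>insert b B. c b *\<^sub>R b) = z' + c b *\<^sub>R b"
    using insert by (simp add: z'_def algebra_simps)
  then have "\<bar>f (z + (\<Sum>b\<in>insert b B. c b *\<^sub>R b)) - f z\<bar>
      \<le> \<bar>f (z' + c b *\<^sub>R b) - f z'\<bar> + \<bar>f z' - f z\<bar>"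
    by simp
  also have "\<dots> \<le> M * \<bar>c b\<bar> + M * (\<Sum>b\<in>B. \<bar>c b\<bar>)"
    using line insert by (simp add: z'_def)
  also have "\<dots> = M * (\<Sum>b\<in>insert b B. \<bar>c b\<bar>)"
    using insert by (simp add: distrib_left)
  finally show ?case .
qed simp

lemma Cc_inf_lipschitz:
  fixes f :: "'a::euclidean_space \<Rightarrow> real"
  assumes "Cc_inf \<Omega> f"
  shows "\<exists>L. L-lipschitz_on UNIV f"
proof -
  obtain M where M: "\<forall>b\<in>Basis. \<forall>z. \<bar>iter_pd [b] f z\<bar> \<le> M"
    using Cc_inf_partials_bounded[OF assms] by blast
  have "\<bar>iter_pd [SOME b. b \<in> Basis] f 0\<bar> \<le> M" using M SOME_Basis by blast
  then have M0: "0 \<le> M" by linarith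
  have "dist (f x) (f y) \<le> (M * DIM('a)) * dist x y" for x y
  proof -
    have "\<bar>f (y + (\<Sum>b\<in>Basis. ((x - y) \<bullet> b) *\<^sub>R b)) - f y\<bar> \<le> M * (\<Sum>b\<in>Basis. \<bar>(x - y) \<bullet> b\<bar>)"
      using assms M by (intro smooth_fun_lipschitz_along_basis_sum) (auto simp: Cc_inf_def)
    also have "\<dots> \<le> M * (\<Sum>b\<in>(Basis::'a set). norm (x - y))"
      using M0 by (intro mult_left_mono sum_mono Basis_le_norm) auto
    finally show ?thesis by (simp add: euclidean_representation dist_real_def dist_norm)
  qed
  then show ?thesis using M0 by (intro exI[of _ "M * DIM('a)"] lipschitz_onI) auto
qed

lemma Cc_inf_in_Hs0:
  assumes "Cc_inf \<Omega> \<phi>"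
  shows "\<phi> \<in> Hs0 s \<Omega>"
proof -
  have "Qform s \<Omega> (\<lambda>x. \<phi> x - \<phi> x) = 0" by (simp add: Qform_def)
  then show ?thesis
    unfolding Hs0_def using assms Cc_inf_borel_measurable_lebesgue[OF assms]
    by (intro CollectI conjI exI[of _ "\<lambda>n. \<phi>"]) auto
qed

section \<open>The Gagliardo form\<close>

definition gagliardo_density :: "real \<Rightarrow> 'a::euclidean_space set \<Rightarrow> ('a \<Rightarrow> real) \<Rightarrow> 'a \<Rightarrow> ennreal" where
  "gagliardo_density s \<Omega> v x = (\<integral>\<^sup>+y. ennreal ((v x - v y)\<^sup>2 / norm (x - y) powr (real DIM('a) + 2 * s))
        * indicator \<Omega> y \<partial>lborel)"

lemma Qform_eq_gagliardo_density:
  "Qform s \<Omega> v = ennreal (c_const DIM('a) s / 2) * (\<integral>\<^sup>+x. gagliardo_density s \<Omega> v x * indicator \<Omega> x \<partial>lborel)"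
  for v :: "'a::euclidean_space \<Rightarrow> real"
  unfolding Qform_def gagliardo_density_def nn_integral_completion ..

lemma borel_measurable_gagliardo_density [measurable]:
  fixes v :: "'a::euclidean_space \<Rightarrow> real"
  assumes [measurable]: "v \<in> borel_measurable borel" "\<Omega> \<in> sets borel"
  shows "gagliardo_density s \<Omega> v \<in> borel_measurable lborel"
proof -
  have "(\<lambda>x. \<integral>\<^sup>+y. (\<lambda>(x, y). ennreal ((v x - v y)\<^sup>2 / norm (x - y) powr (real DIM('a) + 2 * s))
        * indicator \<Omega> y) (x, y) \<partial>lborel) \<in> borel_measurable (lborel :: 'a measure)"
    by (rule lborel.borel_measurable_nn_integral_fst) measurable
  then show ?thesis unfolding gagliardo_density_def by simp
qed

lemma Qform_cong_AE:
  fixes v v' :: "'a::euclidean_space \<Rightarrow> real"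
  assumes "AE x in lborel. v x = v' x"
  shows "Qform s \<Omega> v = Qform s \<Omega> v'"
proof -
  have "gagliardo_density s \<Omega> v x = gagliardo_density s \<Omega> v' x" if "v x = v' x" for x
    unfolding gagliardo_density_def using assms that
    by (intro nn_integral_cong_AE) (auto elim!: eventually_mono)
  then have "(\<integral>\<^sup>+x. gagliardo_density s \<Omega> v x * indicator \<Omega> x \<partial>lborel)
      = (\<integral>\<^sup>+x. gagliardo_density s \<Omega> v' x * indicator \<Omega> x \<partial>lborel)"
    using assms by (intro nn_integral_cong_AE) (auto elim!: eventually_mono)
  then show ?thesis unfolding Qform_eq_gagliardo_density by simp
qed

lemma sq_div_powr_le_of_lipschitz:
  fixes a r L e \<alpha> :: real
  assumes "0 \<le> L" "\<bar>a\<bar> \<le> L * r" "0 \<le> r" "2 \<le> e" "e \<le> 2 + \<alpha>"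
  shows "a\<^sup>2 / r powr e \<le> L\<^sup>2 * (r powr - \<alpha> + 1)"
proof (cases "r = 0")
  case False
  then have r: "0 < r" using assms by simp
  have "a\<^sup>2 \<le> (L * r)\<^sup>2"
    using assms by (simp flip: abs_le_square_iff)
  then have "a\<^sup>2 / r powr e \<le> (L * r)\<^sup>2 / r powr e"
    by (intro divide_right_mono) auto
  also have "\<dots> = L\<^sup>2 * r powr - (e - 2)"
    using r by (simp add: power_mult_distrib powr_diff powr_minus_divide flip: powr_numeral)
  also have "\<dots> \<le> L\<^sup>2 * (r powr - \<alpha> + 1)"
  proof (intro mult_left_mono)
    show "r powr - (e - 2) \<le> r powr - \<alpha> + 1"
    proof (cases "r \<le> 1")
      case True
      then have "r powr - (e - 2) \<le> r powr - \<alpha>"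
        using r assms by (intro powr_mono') auto
      then show ?thesis by simp
    next
      case False
      then have "r powr - (e - 2) \<le> r powr 0"
        using assms by (intro powr_mono) auto
      then have "r powr - (e - 2) \<le> 1" using r by simp
      then show ?thesis using powr_ge_zero[of r "- \<alpha>"] by linarith
    qed
  qed simp
  finally show ?thesis .
qed (use assms in simp)

lemma gagliardo_kernel_le:
  fixes v :: "'a::euclidean_space \<Rightarrow> real" and s s1 :: real
  assumes "L-lipschitz_on UNIV v" "DIM('a) \<ge> 2" "0 \<le> s" "s \<le> s1"
  shows "ennreal ((v x - v y)\<^sup>2 / norm (x - y) powr (real DIM('a) + 2 * s)) * indicator \<Omega> y
    \<le> ennreal (L\<^sup>2) * (ennreal (norm (x - y) powr - (real DIM('a) - 2 + 2 * s1) + 1) * indicator \<Omega> y)"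
proof -
  have "\<bar>v x - v y\<bar> \<le> L * norm (x - y)" "0 \<le> L"
    using lipschitz_onD[OF assms(1)] lipschitz_on_nonneg[OF assms(1)] by (auto simp: dist_norm dist_real_def)
  then have "(v x - v y)\<^sup>2 / norm (x - y) powr (real DIM('a) + 2 * s)
      \<le> L\<^sup>2 * (norm (x - y) powr - (real DIM('a) - 2 + 2 * s1) + 1)"
    using assms(2-4) by (intro sq_div_powr_le_of_lipschitz) auto
  then have "ennreal ((v x - v y)\<^sup>2 / norm (x - y) powr (real DIM('a) + 2 * s))
      \<le> ennreal (L\<^sup>2) * ennreal (norm (x - y) powr - (real DIM('a) - 2 + 2 * s1) + 1)"
    by (simp only: ennreal_mult'[symmetric] zero_le_power2 ennreal_leI)
  then show ?thesis by (cases "y \<in> \<Omega>") simp_all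
qed

lemma gagliardo_kernel_integral_bounded:
  fixes \<Omega> :: "'a::euclidean_space set" and s1 :: real
  assumes "bounded \<Omega>" "\<Omega> \<in> sets borel" "DIM('a) \<ge> 2" "0 \<le> s1" "s1 < 1"
  shows "\<exists>C. \<forall>x\<in>\<Omega>. (\<integral>\<^sup>+y. ennreal (L\<^sup>2) *
      (ennreal (norm (x - y) powr - (real DIM('a) - 2 + 2 * s1) + 1) * indicator \<Omega> y) \<partial>lborel) \<le> ennreal C"
proof -
  obtain C where C: "\<forall>x\<in>\<Omega>. (\<integral>\<^sup>+y. ennreal (norm (x - y) powr - (real DIM('a) - 2 + 2 * s1) + 1)
      * indicator \<Omega> y \<partial>lborel) \<le> ennreal C"
    using nn_integral_singular_kernel_bounded[OF assms(1,2), of "real DIM('a) - 2 + 2 * s1"] assms(3-5)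
    by auto
  have "(\<integral>\<^sup>+y. ennreal (L\<^sup>2) * (ennreal (norm (x - y) powr - (real DIM('a) - 2 + 2 * s1) + 1)
      * indicator \<Omega> y) \<partial>lborel) \<le> ennreal (L\<^sup>2 * C)" if "x \<in> \<Omega>" for x
    using C that assms(2) by (simp add: nn_integral_cmult ennreal_mult' mult_left_mono)
  then show ?thesis by blast
qed

lemma gagliardo_density_tendsto_at_right:
  fixes v :: "'a::euclidean_space \<Rightarrow> real"
  assumes lip: "L-lipschitz_on UNIV v" and \<Omega>: "bounded \<Omega>" "\<Omega> \<in> sets borel" and N: "DIM('a) \<ge> 2"
    and s0: "0 \<le> s0" "s0 < 1" and x: "x \<in> \<Omega>"
  shows "((\<lambda>s. gagliardo_density s \<Omega> v x) \<longlongrightarrow> gagliardo_density s0 \<Omega> v x) (at_right s0)"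
proof -
  define s1 where "s1 = (s0 + 1) / 2"
  have s1: "s0 < s1" "s1 < 1" using s0 by (auto simp: s1_def)
  define w where "w y = ennreal (L\<^sup>2) *
      (ennreal (norm (x - y) powr - (real DIM('a) - 2 + 2 * s1) + 1) * indicator \<Omega> y)" for y
  obtain C where "\<forall>x\<in>\<Omega>. (\<integral>\<^sup>+y. ennreal (L\<^sup>2) *
      (ennreal (norm (x - y) powr - (real DIM('a) - 2 + 2 * s1) + 1) * indicator \<Omega> y) \<partial>lborel) \<le> ennreal C"
    using gagliardo_kernel_integral_bounded[OF \<Omega> N, of s1] s0 s1 by auto
  then have w_finite: "(\<integral>\<^sup>+y. w y \<partial>lborel) < \<infinity>"
    using x unfolding w_def by (auto intro: le_less_trans)
  have [measurable]: "v \<in> borel_measurable borel" "\<Omega> \<in> sets borel"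
    using borel_measurable_continuous_onI[OF lipschitz_on_continuous_on[OF lip]] \<Omega> by auto
  have w_measurable: "w \<in> borel_measurable borel"
    unfolding w_def by measurable
  show ?thesis unfolding gagliardo_density_def
  proof (rule nn_integral_dominated_convergence_at[where w = w])
    show "\<forall>\<^sub>F s in at_right s0. AE y in lborel.
        ennreal ((v x - v y)\<^sup>2 / norm (x - y) powr (real DIM('a) + 2 * s)) * indicator \<Omega> y \<le> w y"
      using gagliardo_kernel_le[OF lip N] s0
      by (intro eventually_at_rightI[OF _ s1(1)] AE_I2) (auto simp: w_def)
    show "AE y in lborel. ((\<lambda>s. ennreal ((v x - v y)\<^sup>2 / norm (x - y) powr (real DIM('a) + 2 * s))
        * indicator \<Omega> y) \<longlongrightarrow> ennreal ((v x - v y)\<^sup>2 / norm (x - y) powr (real DIM('a) + 2 * s0))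
        * indicator \<Omega> y) (at_right s0)"
    proof (rule AE_I2)
      fix y
      show "((\<lambda>s. ennreal ((v x - v y)\<^sup>2 / norm (x - y) powr (real DIM('a) + 2 * s)) * indicator \<Omega> y)
          \<longlongrightarrow> ennreal ((v x - v y)\<^sup>2 / norm (x - y) powr (real DIM('a) + 2 * s0)) * indicator \<Omega> y)
          (at_right s0)"
      proof (cases "y = x")
        case False
        then have "((\<lambda>s. (v x - v y)\<^sup>2 / norm (x - y) powr (real DIM('a) + 2 * s))
            \<longlongrightarrow> (v x - v y)\<^sup>2 / norm (x - y) powr (real DIM('a) + 2 * s0)) (at_right s0)"
          by (intro tendsto_intros) auto
        then show ?thesis by (cases "y \<in> \<Omega>") auto
      qed simp
    qed
  qed (use w_finite w_measurable in auto)
qed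

lemma gagliardo_density_bounded:
  fixes v :: "'a::euclidean_space \<Rightarrow> real" and s1 :: real
  assumes lip: "L-lipschitz_on UNIV v" and \<Omega>: "bounded \<Omega>" "\<Omega> \<in> sets borel" and N: "DIM('a) \<ge> 2"
    and s1: "0 \<le> s1" "s1 < 1"
  shows "\<exists>C. \<forall>s x. 0 \<le> s \<longrightarrow> s \<le> s1 \<longrightarrow> x \<in> \<Omega> \<longrightarrow> gagliardo_density s \<Omega> v x \<le> ennreal C"
proof -
  obtain C where C: "\<forall>x\<in>\<Omega>. (\<integral>\<^sup>+y. ennreal (L\<^sup>2) *
      (ennreal (norm (x - y) powr - (real DIM('a) - 2 + 2 * s1) + 1) * indicator \<Omega> y) \<partial>lborel) \<le> ennreal C"
    using gagliardo_kernel_integral_bounded[OF \<Omega> N s1] by blast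
  have "gagliardo_density s \<Omega> v x \<le> ennreal C" if "0 \<le> s" "s \<le> s1" "x \<in> \<Omega>" for s x
    unfolding gagliardo_density_def
    by (rule order_trans[OF nn_integral_mono C[rule_format, OF that(3)]])
       (rule gagliardo_kernel_le[OF lip N that(1,2)])
  then show ?thesis by blast
qed

lemma c_const_pos: "0 < s \<Longrightarrow> s < 1 \<Longrightarrow> 0 < c_const N s"
  unfolding c_const_def by (intro divide_pos_pos mult_pos_pos Gamma_real_pos) auto

lemma isCont_c_const:
  assumes "0 < s" "s < 1"
  shows "isCont (c_const N) s"
proof -
  have "(real N + 2 * s) / 2 \<notin> \<int>\<^sub>\<le>\<^sub>0" "1 - s \<notin> \<int>\<^sub>\<le>\<^sub>0"
    using assms nonpos_Ints_nonpos by force+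
  moreover have "0 < Gamma (1 - s)"
    using assms by (intro Gamma_real_pos) simp
  ultimately show ?thesis
    unfolding c_const_def by (intro continuous_intros isCont_Gamma) auto
qed

lemma Qform_tendsto_at_right:
  fixes v :: "'a::euclidean_space \<Rightarrow> real"
  assumes lip: "L-lipschitz_on UNIV v" and \<Omega>: "bounded \<Omega>" "\<Omega> \<in> sets borel" and N: "DIM('a) \<ge> 2"
    and s0: "0 < s0" "s0 < 1"
  shows "((\<lambda>s. Qform s \<Omega> v) \<longlongrightarrow> Qform s0 \<Omega> v) (at_right s0)"
proof -
  define s1 where "s1 = (s0 + 1) / 2"
  have s1: "s0 < s1" "s1 < 1" using s0 by (auto simp: s1_def)
  obtain C where C: "\<And>s x. 0 \<le> s \<Longrightarrow> s \<le> s1 \<Longrightarrow> x \<in> \<Omega> \<Longrightarrow> gagliardo_density s \<Omega> v x \<le> ennreal C"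
    using gagliardo_density_bounded[OF lip \<Omega> N, of s1] s0 s1 by auto
  have [measurable]: "v \<in> borel_measurable borel" "\<Omega> \<in> sets borel"
    using borel_measurable_continuous_onI[OF lipschitz_on_continuous_on[OF lip]] \<Omega> by auto
  have "((\<lambda>s. \<integral>\<^sup>+x. gagliardo_density s \<Omega> v x * indicator \<Omega> x \<partial>lborel)
      \<longlongrightarrow> (\<integral>\<^sup>+x. gagliardo_density s0 \<Omega> v x * indicator \<Omega> x \<partial>lborel)) (at_right s0)"
  proof (rule nn_integral_dominated_convergence_at[where w = "\<lambda>x. ennreal C * indicator \<Omega> x"])
    show "\<forall>\<^sub>F s in at_right s0. AE x in lborel.
        gagliardo_density s \<Omega> v x * indicator \<Omega> x \<le> ennreal C * indicator \<Omega> x"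
      using C s0 by (intro eventually_at_rightI[OF _ s1(1)] AE_I2) (auto simp: indicator_def)
    have "(\<integral>\<^sup>+x. ennreal C * indicator \<Omega> x \<partial>lborel) = ennreal C * emeasure lborel \<Omega>"
      using \<Omega>(2) by (intro nn_integral_cmult_indicator) simp
    then show "(\<integral>\<^sup>+x. ennreal C * indicator \<Omega> x \<partial>lborel) < \<infinity>"
      using emeasure_bounded_finite[OF \<Omega>(1)] by (simp add: ennreal_mult_less_top)
    show "AE x in lborel. ((\<lambda>s. gagliardo_density s \<Omega> v x * indicator \<Omega> x)
        \<longlongrightarrow> gagliardo_density s0 \<Omega> v x * indicator \<Omega> x) (at_right s0)"
      using gagliardo_density_tendsto_at_right[OF lip \<Omega> N] s0
      by (intro AE_I2) (auto simp: indicator_def)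
  qed measurable
  moreover have "(c_const DIM('a) \<longlongrightarrow> c_const DIM('a) s0) (at_right s0)"
    using isCont_c_const[OF s0] by (simp add: isCont_def filterlim_at_split)
  then have "((\<lambda>s. ennreal (c_const DIM('a) s / 2)) \<longlongrightarrow> ennreal (c_const DIM('a) s0 / 2)) (at_right s0)"
    by (intro tendsto_ennrealI tendsto_divide tendsto_const) auto
  ultimately show ?thesis
    unfolding Qform_eq_gagliardo_density using c_const_pos[OF s0, of "DIM('a)"]
    by (intro tendsto_mult_ennreal) auto
qed

lemma sq_add_le:
  fixes X Y e :: real
  assumes "0 < e"
  shows "(X + Y)\<^sup>2 \<le> (1 + e) * X\<^sup>2 + (1 + 1 / e) * Y\<^sup>2"
proof -
  have "e * ((1 + e) * X\<^sup>2 + (1 + 1 / e) * Y\<^sup>2 - (X + Y)\<^sup>2) = (e * X - Y)\<^sup>2"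
    using assms by (simp add: field_simps power2_eq_square)
  then show ?thesis
    using assms by (smt (verit) zero_le_mult_iff zero_le_power2)
qed

lemma Qform_add_le_borel:
  fixes a b :: "'a::euclidean_space \<Rightarrow> real"
  assumes [measurable]: "a \<in> borel_measurable borel" "b \<in> borel_measurable borel" "\<Omega> \<in> sets borel"
    and e: "0 < e"
  shows "Qform s \<Omega> (\<lambda>x. a x + b x) \<le> ennreal (1 + e) * Qform s \<Omega> a + ennreal (1 + 1 / e) * Qform s \<Omega> b"
proof -
  have kernel: "ennreal (((a x + b x) - (a y + b y))\<^sup>2 / k) * indicator \<Omega> y
      \<le> ennreal (1 + e) * (ennreal ((a x - a y)\<^sup>2 / k) * indicator \<Omega> y)
        + ennreal (1 + 1 / e) * (ennreal ((b x - b y)\<^sup>2 / k) * indicator \<Omega> y)" if "0 \<le> k" for x y k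
  proof -
    have "((a x + b x) - (a y + b y))\<^sup>2 / k \<le> ((1 + e) * (a x - a y)\<^sup>2 + (1 + 1 / e) * (b x - b y)\<^sup>2) / k"
      using sq_add_le[OF e, of "a x - a y" "b x - b y"] that
      by (intro divide_right_mono) (simp_all add: algebra_simps)
    also have "\<dots> = (1 + e) * ((a x - a y)\<^sup>2 / k) + (1 + 1 / e) * ((b x - b y)\<^sup>2 / k)"
      by (simp add: add_divide_distrib)
    finally have "ennreal (((a x + b x) - (a y + b y))\<^sup>2 / k)
        \<le> ennreal ((1 + e) * ((a x - a y)\<^sup>2 / k) + (1 + 1 / e) * ((b x - b y)\<^sup>2 / k))"
      by (rule ennreal_leI)
    also have "\<dots> = ennreal (1 + e) * ennreal ((a x - a y)\<^sup>2 / k) + ennreal (1 + 1 / e) * ennreal ((b x - b y)\<^sup>2 / k)"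
      using e that by (simp add: ennreal_plus[symmetric] ennreal_mult[symmetric] del: ennreal_plus)
    finally show ?thesis by (cases "y \<in> \<Omega>") simp_all
  qed
  have "gagliardo_density s \<Omega> (\<lambda>x. a x + b x) x
      \<le> ennreal (1 + e) * gagliardo_density s \<Omega> a x + ennreal (1 + 1 / e) * gagliardo_density s \<Omega> b x" for x
    unfolding gagliardo_density_def by (rule nn_integral_le_lincomb) (measurable, rule kernel, simp)
  then have "(\<integral>\<^sup>+x. gagliardo_density s \<Omega> (\<lambda>x. a x + b x) x * indicator \<Omega> x \<partial>lborel)
      \<le> ennreal (1 + e) * (\<integral>\<^sup>+x. gagliardo_density s \<Omega> a x * indicator \<Omega> x \<partial>lborel)
        + ennreal (1 + 1 / e) * (\<integral>\<^sup>+x. gagliardo_density s \<Omega> b x * indicator \<Omega> x \<partial>lborel)"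
    by (intro nn_integral_le_lincomb) (measurable, auto simp: indicator_def)
  then show ?thesis
    unfolding Qform_eq_gagliardo_density
    using mult_left_mono[of _ _ "ennreal (c_const DIM('a) s / 2)"]
    by (fastforce simp: distrib_left mult.left_commute)
qed

lemma Qform_add_le:
  fixes a b :: "'a::euclidean_space \<Rightarrow> real"
  assumes "a \<in> borel_measurable lebesgue" "b \<in> borel_measurable lebesgue" "\<Omega> \<in> sets borel"
    and e: "0 < e"
  shows "Qform s \<Omega> (\<lambda>x. a x + b x) \<le> ennreal (1 + e) * Qform s \<Omega> a + ennreal (1 + 1 / e) * Qform s \<Omega> b"
proof -
  obtain a' where a': "a' \<in> borel_measurable lborel" "AE x in lborel. a x = a' x"
    using completion_ex_borel_measurable_real[OF assms(1)] by blast
  obtain b' where b': "b' \<in> borel_measurable lborel" "AE x in lborel. b x = b' x"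
    using completion_ex_borel_measurable_real[OF assms(2)] by blast
  have "Qform s \<Omega> (\<lambda>x. a x + b x) = Qform s \<Omega> (\<lambda>x. a' x + b' x)"
    using a'(2) b'(2) by (intro Qform_cong_AE) auto
  also have "\<dots> \<le> ennreal (1 + e) * Qform s \<Omega> a' + ennreal (1 + 1 / e) * Qform s \<Omega> b'"
    using a'(1) b'(1) assms(3) e by (intro Qform_add_le_borel) auto
  also have "\<dots> = ennreal (1 + e) * Qform s \<Omega> a + ennreal (1 + 1 / e) * Qform s \<Omega> b"
    using a'(2) b'(2) by (simp add: Qform_cong_AE[of a a'] Qform_cong_AE[of b b'])
  finally show ?thesis .
qed

lemma Qform_eventually_le:
  fixes u :: "'a::euclidean_space \<Rightarrow> real"
  assumes "u \<in> borel_measurable lebesgue" "\<And>n. \<phi> n \<in> borel_measurable lebesgue" "\<Omega> \<in> sets borel"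
    and lim: "(\<lambda>n. Qform s \<Omega> (\<lambda>x. \<phi> n x - u x)) \<longlonglongrightarrow> 0" and \<delta>: "0 < \<delta>"
  shows "\<forall>\<^sub>F n in sequentially. Qform s \<Omega> (\<phi> n) \<le> ennreal (1 + \<delta>) * Qform s \<Omega> u + ennreal \<delta>"
proof -
  have "(\<lambda>n. ennreal (1 + 1 / \<delta>) * Qform s \<Omega> (\<lambda>x. \<phi> n x - u x)) \<longlonglongrightarrow> ennreal (1 + 1 / \<delta>) * 0"
    by (rule ennreal_tendsto_cmult[OF _ lim]) simp
  then have "\<forall>\<^sub>F n in sequentially. ennreal (1 + 1 / \<delta>) * Qform s \<Omega> (\<lambda>x. \<phi> n x - u x) < ennreal \<delta>"
    using \<delta> by (intro order_tendstoD(2)) auto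
  then show ?thesis
  proof eventually_elim
    case (elim n)
    have "Qform s \<Omega> (\<phi> n) = Qform s \<Omega> (\<lambda>x. u x + (\<phi> n x - u x))"
      by simp
    also have "\<dots> \<le> ennreal (1 + \<delta>) * Qform s \<Omega> u + ennreal (1 + 1 / \<delta>) * Qform s \<Omega> (\<lambda>x. \<phi> n x - u x)"
      using assms \<delta> by (intro Qform_add_le) auto
    also have "\<dots> \<le> ennreal (1 + \<delta>) * Qform s \<Omega> u + ennreal \<delta>"
      using elim by (intro add_left_mono) simp
    finally show ?case .
  qed
qed

section \<open>Integrals of powers\<close>

definition Lp_integral :: "real \<Rightarrow> 'a::euclidean_space set \<Rightarrow> ('a \<Rightarrow> real) \<Rightarrow> ennreal" where
  "Lp_integral p \<Omega> u = (\<integral>\<^sup>+x. ennreal (\<bar>u x\<bar> powr p) * indicator \<Omega> x \<partial>lebesgue)"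

lemma Lp_norm_sq_eq_Lp_integral: "Lp_norm_sq p \<Omega> u = enn2real (Lp_integral p \<Omega> u) powr (2 / p)"
  unfolding Lp_norm_sq_def Lp_integral_def ..

lemma Lp_integral_eq_0_iff:
  assumes [measurable]: "u \<in> borel_measurable lebesgue" "\<Omega> \<in> sets lebesgue"
  shows "Lp_integral p \<Omega> u = 0 \<longleftrightarrow> (AE x in lebesgue. x \<in> \<Omega> \<longrightarrow> u x = 0)"
proof -
  have "Lp_integral p \<Omega> u = 0 \<longleftrightarrow> (AE x in lebesgue. ennreal (\<bar>u x\<bar> powr p) * indicator \<Omega> x = 0)"
    unfolding Lp_integral_def by (rule nn_integral_0_iff_AE) measurable
  also have "\<dots> \<longleftrightarrow> (AE x in lebesgue. x \<in> \<Omega> \<longrightarrow> u x = 0)"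
    by (rule AE_cong) (auto simp: indicator_def)
  finally show ?thesis .
qed

lemma Lp_integral_finite:
  assumes "\<And>x. \<bar>u x\<bar> \<le> M" "bounded \<Omega>" "\<Omega> \<in> sets borel" "0 \<le> p"
  shows "Lp_integral p \<Omega> u < \<infinity>"
proof -
  have "Lp_integral p \<Omega> u \<le> (\<integral>\<^sup>+x. ennreal (M powr p) * indicator \<Omega> x \<partial>lborel)"
    unfolding Lp_integral_def nn_integral_completion
    using assms(1,4) by (intro nn_integral_mono) (auto simp: indicator_def intro: ennreal_leI powr_mono2)
  also have "\<dots> = ennreal (M powr p) * emeasure lborel \<Omega>"
    using assms(3) by (intro nn_integral_cmult_indicator) simp
  also have "\<dots> < \<infinity>"
    using emeasure_bounded_finite[OF assms(2)] by (simp add: ennreal_mult_less_top)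
  finally show ?thesis .
qed

lemma Lp_integral_tendsto:
  assumes u [measurable]: "u \<in> borel_measurable lebesgue" and M: "\<And>x. \<bar>u x\<bar> \<le> M"
    and \<Omega>: "bounded \<Omega>" "\<Omega> \<in> sets borel" and p0: "0 < p0"
  shows "((\<lambda>p. Lp_integral p \<Omega> u) \<longlongrightarrow> Lp_integral p0 \<Omega> u) (at p0)"
proof -
  have [measurable]: "\<Omega> \<in> sets lebesgue" using \<Omega>(2) by simp
  define w where "w x = ennreal ((M + 1) powr (p0 + 1)) * indicator \<Omega> x" for x
  have [measurable]: "w \<in> borel_measurable lebesgue"
    unfolding w_def by measurable
  show ?thesis
    unfolding Lp_integral_def
  proof (rule nn_integral_dominated_convergence_at[where w = w])
    have "\<forall>\<^sub>F p in at p0. 0 < p \<and> p < p0 + 1"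
      using p0 by (intro eventually_conj order_tendstoD[OF tendsto_ident_at]) auto
    then show "\<forall>\<^sub>F p in at p0. AE x in lebesgue.
        ennreal (\<bar>u x\<bar> powr p) * indicator \<Omega> x \<le> w x"
    proof eventually_elim
      case (elim p)
      have "\<bar>u x\<bar> powr p \<le> (M + 1) powr (p0 + 1)" for x
      proof -
        have "\<bar>u x\<bar> powr p \<le> (M + 1) powr p"
          using M[of x] elim by (intro powr_mono2) auto
        also have "\<dots> \<le> (M + 1) powr (p0 + 1)"
          using M[of x] elim by (intro powr_mono) auto
        finally show ?thesis .
      qed
      then show ?case by (intro AE_I2) (auto simp: w_def indicator_def intro: ennreal_leI)
    qed
    have "(\<integral>\<^sup>+x. w x \<partial>lebesgue) = ennreal ((M + 1) powr (p0 + 1)) * emeasure lborel \<Omega>"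
      using \<Omega>(2) by (simp add: w_def nn_integral_completion nn_integral_cmult_indicator)
    then show "(\<integral>\<^sup>+x. w x \<partial>lebesgue) < \<infinity>"
      using emeasure_bounded_finite[OF \<Omega>(1)] by (simp add: ennreal_mult_less_top)
    show "AE x in lebesgue. ((\<lambda>p. ennreal (\<bar>u x\<bar> powr p) * indicator \<Omega> x)
        \<longlongrightarrow> ennreal (\<bar>u x\<bar> powr p0) * indicator \<Omega> x) (at p0)"
    proof (rule AE_I2)
      fix x
      have "((\<lambda>p. \<bar>u x\<bar> powr p) \<longlongrightarrow> \<bar>u x\<bar> powr p0) (at p0)"
        using p0 by (intro tendsto_powr' tendsto_const tendsto_ident_at) auto
      then show "((\<lambda>p. ennreal (\<bar>u x\<bar> powr p) * indicator \<Omega> x)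
          \<longlongrightarrow> ennreal (\<bar>u x\<bar> powr p0) * indicator \<Omega> x) (at p0)"
        by (cases "x \<in> \<Omega>") auto
    qed
  qed measurable
qed

lemma Lp_norm_sq_tendsto:
  assumes "u \<in> borel_measurable lebesgue" "\<And>x. \<bar>u x\<bar> \<le> M" "bounded \<Omega>" "\<Omega> \<in> sets borel" "0 < p0"
  shows "((\<lambda>p. Lp_norm_sq p \<Omega> u) \<longlongrightarrow> Lp_norm_sq p0 \<Omega> u) (at p0)"
proof -
  have "((\<lambda>p. Lp_integral p \<Omega> u) \<longlongrightarrow> Lp_integral p0 \<Omega> u) (at p0)"
    by (rule Lp_integral_tendsto[OF assms])
  then have "((\<lambda>p. enn2real (Lp_integral p \<Omega> u)) \<longlongrightarrow> enn2real (Lp_integral p0 \<Omega> u)) (at p0)"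
    using Lp_integral_finite[of u M \<Omega> p0] assms by (intro tendsto_enn2real) auto
  then show ?thesis
    unfolding Lp_norm_sq_eq_Lp_integral using assms(5)
    by (intro tendsto_powr' tendsto_divide tendsto_const tendsto_ident_at) auto
qed

lemma Lp_norm_sq_pos:
  assumes "u \<in> borel_measurable lebesgue" "\<And>x. \<bar>u x\<bar> \<le> M" "bounded \<Omega>" "\<Omega> \<in> sets borel" "0 \<le> p"
    and "\<not> (AE x in lebesgue. x \<in> \<Omega> \<longrightarrow> u x = 0)"
  shows "0 < Lp_norm_sq p \<Omega> u"
proof -
  have "Lp_integral p \<Omega> u \<noteq> 0"
    using assms by (subst Lp_integral_eq_0_iff) auto
  then have "0 < enn2real (Lp_integral p \<Omega> u)"
    using Lp_integral_finite[of u M \<Omega> p] assms by (simp add: enn2real_positive_iff zero_less_iff_neq_zero)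
  then show ?thesis unfolding Lp_norm_sq_eq_Lp_integral by simp
qed

lemma Lp_integral_le_liminf:
  fixes f :: "nat \<Rightarrow> 'a::euclidean_space \<Rightarrow> real"
  assumes [measurable]: "\<And>n. f n \<in> borel_measurable lebesgue" "\<Omega> \<in> sets lebesgue" and p: "0 < p"
    and ae: "AE x in lebesgue. x \<in> \<Omega> \<longrightarrow> (\<lambda>n. f n x) \<longlonglongrightarrow> u x"
  shows "Lp_integral p \<Omega> u \<le> liminf (\<lambda>n. Lp_integral p \<Omega> (f n))"
proof -
  have "Lp_integral p \<Omega> u
      = (\<integral>\<^sup>+x. liminf (\<lambda>n. ennreal (\<bar>f n x\<bar> powr p) * indicator \<Omega> x) \<partial>lebesgue)"
    unfolding Lp_integral_def
  proof (rule nn_integral_cong_AE)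
    show "AE x in lebesgue. ennreal (\<bar>u x\<bar> powr p) * indicator \<Omega> x
        = liminf (\<lambda>n. ennreal (\<bar>f n x\<bar> powr p) * indicator \<Omega> x)"
      using ae
    proof eventually_elim
      case (elim x)
      show ?case
      proof (cases "x \<in> \<Omega>")
        case True
        then have "(\<lambda>n. ennreal (\<bar>f n x\<bar> powr p)) \<longlonglongrightarrow> ennreal (\<bar>u x\<bar> powr p)"
          using elim p by (intro tendsto_ennrealI tendsto_powr' tendsto_rabs) auto
        then have "liminf (\<lambda>n. ennreal (\<bar>f n x\<bar> powr p)) = ennreal (\<bar>u x\<bar> powr p)"
          by (intro lim_imp_Liminf) auto
        then show ?thesis
          using True by simp
      qed (simp add: Liminf_const)
    qed
  qed
  also have "\<dots> \<le> liminf (\<lambda>n. Lp_integral p \<Omega> (f n))"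
    unfolding Lp_integral_def by (rule nn_integral_liminf) measurable
  finally show ?thesis .
qed

section \<open>The Rayleigh quotient\<close>

definition rayleigh :: "real \<Rightarrow> 'a::euclidean_space set \<Rightarrow> ('a \<Rightarrow> real) \<Rightarrow> ennreal" where
  "rayleigh s \<Omega> u = Qform s \<Omega> u / ennreal (Lp_norm_sq (crit_exp DIM('a) s) \<Omega> u)"

lemma S_const_le_rayleigh:
  "u \<in> Hs0 s \<Omega> \<Longrightarrow> \<not> (AE x in lebesgue. x \<in> \<Omega> \<longrightarrow> u x = 0) \<Longrightarrow> S_const s \<Omega> \<le> rayleigh s \<Omega> u"
  unfolding S_const_def rayleigh_def by (rule INF_lower) auto

lemma rayleigh_tendsto_at_right:
  fixes \<phi> :: "'a::euclidean_space \<Rightarrow> real"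
  assumes \<phi>: "Cc_inf \<Omega> \<phi>" "\<not> (AE x in lebesgue. x \<in> \<Omega> \<longrightarrow> \<phi> x = 0)"
    and \<Omega>: "bounded \<Omega>" "open \<Omega>" and N: "DIM('a) \<ge> 2" and s0: "0 < s0" "s0 < 1"
  shows "((\<lambda>s. rayleigh s \<Omega> \<phi>) \<longlongrightarrow> rayleigh s0 \<Omega> \<phi>) (at_right s0)"
proof -
  define L where "L s = Lp_norm_sq (crit_exp DIM('a) s) \<Omega> \<phi>" for s
  obtain Lip where "Lip-lipschitz_on UNIV \<phi>"
    using Cc_inf_lipschitz[OF \<phi>(1)] by blast
  then have Q: "((\<lambda>s. Qform s \<Omega> \<phi>) \<longlongrightarrow> Qform s0 \<Omega> \<phi>) (at_right s0)"
    using \<Omega> N s0 by (intro Qform_tendsto_at_right) auto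
  obtain M where M: "\<And>x. \<bar>\<phi> x\<bar> \<le> M"
    using Cc_inf_bounded[OF \<phi>(1)] by blast
  note \<phi>_measurable = Cc_inf_borel_measurable_lebesgue[OF \<phi>(1)]
  have p0: "0 < crit_exp DIM('a) s0"
    using N s0 by (simp add: crit_exp_def)
  have "isCont (\<lambda>p. Lp_norm_sq p \<Omega> \<phi>) (crit_exp DIM('a) s0)"
    unfolding isCont_def using Lp_norm_sq_tendsto[OF \<phi>_measurable M \<Omega>(1) _ p0] \<Omega>(2) by auto
  moreover have "(crit_exp DIM('a) \<longlongrightarrow> crit_exp DIM('a) s0) (at_right s0)"
    using N s0 unfolding crit_exp_def by (intro tendsto_intros) auto
  ultimately have L_tendsto: "(L \<longlongrightarrow> L s0) (at_right s0)"
    unfolding L_def by (rule isCont_tendsto_compose)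
  have L_pos: "0 < L s0"
    unfolding L_def using Lp_norm_sq_pos[OF \<phi>_measurable M \<Omega>(1) _ _ \<phi>(2)] p0 \<Omega>(2) by auto
  have "((\<lambda>s. ennreal (inverse (L s))) \<longlongrightarrow> ennreal (inverse (L s0))) (at_right s0)"
    using L_tendsto L_pos by (intro tendsto_ennrealI tendsto_inverse) auto
  moreover have "\<forall>\<^sub>F s in at_right s0. ennreal (inverse (L s)) = inverse (ennreal (L s))"
    using order_tendstoD(1)[OF L_tendsto L_pos] by eventually_elim (simp add: inverse_ennreal)
  ultimately have "((\<lambda>s. inverse (ennreal (L s))) \<longlongrightarrow> inverse (ennreal (L s0))) (at_right s0)"
    using L_pos by (simp add: inverse_ennreal tendsto_cong)
  then show ?thesis
    unfolding rayleigh_def divide_ennreal_def L_def[symmetric] using Q L_pos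
    by (intro tendsto_mult_ennreal) (auto simp: inverse_ennreal)
qed

lemma Limsup_S_const_le_rayleigh:
  fixes \<phi> :: "'a::euclidean_space \<Rightarrow> real"
  assumes "Cc_inf \<Omega> \<phi>" "\<not> (AE x in lebesgue. x \<in> \<Omega> \<longrightarrow> \<phi> x = 0)"
    and "bounded \<Omega>" "open \<Omega>" "DIM('a) \<ge> 2" "0 < s0" "s0 < 1"
  shows "Limsup (at_right s0) (\<lambda>s. S_const s \<Omega>) \<le> rayleigh s0 \<Omega> \<phi>"
proof -
  have "Limsup (at_right s0) (\<lambda>s. S_const s \<Omega>) \<le> Limsup (at_right s0) (\<lambda>s. rayleigh s \<Omega> \<phi>)"
    using S_const_le_rayleigh[OF Cc_inf_in_Hs0[OF assms(1)] assms(2)] by (intro Limsup_mono) auto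
  also have "\<dots> = rayleigh s0 \<Omega> \<phi>"
    using rayleigh_tendsto_at_right[OF assms] by (intro lim_imp_Limsup) auto
  finally show ?thesis .
qed

lemma Hs0_approximation:
  assumes "u \<in> Hs0 s \<Omega>"
  obtains \<phi> where "\<And>n. Cc_inf \<Omega> (\<phi> n)"
    "(\<lambda>n. \<integral>\<^sup>+x. ennreal ((\<phi> n x - u x)\<^sup>2) * indicator \<Omega> x \<partial>lebesgue) \<longlonglongrightarrow> 0"
    "(\<lambda>n. Qform s \<Omega> (\<lambda>x. \<phi> n x - u x)) \<longlonglongrightarrow> 0"
proof -
  obtain \<phi> where \<phi>: "\<And>n. Cc_inf \<Omega> (\<phi> n)"
    and lim: "(\<lambda>n. (\<integral>\<^sup>+x. ennreal ((\<phi> n x - u x)\<^sup>2) * indicator \<Omega> x \<partial>lebesgue)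
        + Qform s \<Omega> (\<lambda>x. \<phi> n x - u x)) \<longlonglongrightarrow> 0"
    using assms unfolding Hs0_def by blast
  have "(\<lambda>n. \<integral>\<^sup>+x. ennreal ((\<phi> n x - u x)\<^sup>2) * indicator \<Omega> x \<partial>lebesgue) \<longlonglongrightarrow> 0"
    by (rule tendsto_sandwich[OF _ _ tendsto_const lim]) (auto intro: add_increasing2)
  moreover have "(\<lambda>n. Qform s \<Omega> (\<lambda>x. \<phi> n x - u x)) \<longlonglongrightarrow> 0"
    by (rule tendsto_sandwich[OF _ _ tendsto_const lim]) (auto intro: add_increasing)
  ultimately show thesis using \<phi> that by blast
qed

lemma rayleigh_mult_le:
  fixes \<psi> :: "'a::euclidean_space \<Rightarrow> real" and s :: real
  defines "p \<equiv> crit_exp DIM('a) s"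
  assumes m: "m \<le> rayleigh s \<Omega> \<psi>" and fin: "Lp_integral p \<Omega> \<psi> < \<infinity>"
    and Y: "0 < Y" "ennreal Y < Lp_integral p \<Omega> \<psi>" and p: "0 < p"
  shows "m * ennreal (Y powr (2 / p)) \<le> Qform s \<Omega> \<psi>"
proof -
  have "Y < enn2real (Lp_integral p \<Omega> \<psi>)"
    using fin Y by (cases "Lp_integral p \<Omega> \<psi>") (auto simp: ennreal_less_iff)
  then have L: "Y powr (2 / p) \<le> Lp_norm_sq p \<Omega> \<psi>"
    unfolding Lp_norm_sq_eq_Lp_integral using Y p by (intro powr_mono2) auto
  moreover have "0 < Y powr (2 / p)"
    using Y by simp
  ultimately have "0 < Lp_norm_sq p \<Omega> \<psi>"
    by linarith
  then have "m * ennreal (Lp_norm_sq p \<Omega> \<psi>) \<le> Qform s \<Omega> \<psi>"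
    using m unfolding rayleigh_def p_def[symmetric] by (subst (asm) ennreal_le_divide_iff) auto
  moreover have "m * ennreal (Y powr (2 / p)) \<le> m * ennreal (Lp_norm_sq p \<Omega> \<psi>)"
    using L by (intro mult_left_mono ennreal_leI) auto
  ultimately show ?thesis by simp
qed

lemma rayleigh_lower_bound_approx:
  fixes u :: "'a::euclidean_space \<Rightarrow> real" and m :: ennreal and s :: real
  defines "p \<equiv> crit_exp DIM('a) s"
  assumes lower: "\<And>\<psi>. Cc_inf \<Omega> \<psi> \<Longrightarrow> \<not> (AE x in lebesgue. x \<in> \<Omega> \<longrightarrow> \<psi> x = 0) \<Longrightarrow> m \<le> rayleigh s \<Omega> \<psi>"
    and \<phi>: "\<And>n. Cc_inf \<Omega> (\<phi> n)" and u: "u \<in> borel_measurable lebesgue"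
    and ae: "AE x in lebesgue. x \<in> \<Omega> \<longrightarrow> (\<lambda>n. \<phi> n x) \<longlonglongrightarrow> u x"
    and Q: "(\<lambda>n. Qform s \<Omega> (\<lambda>x. \<phi> n x - u x)) \<longlonglongrightarrow> 0"
    and \<Omega>: "bounded \<Omega>" "open \<Omega>" and p: "0 < p"
    and Y: "0 < Y" "ennreal Y < Lp_integral p \<Omega> u"
  shows "m * ennreal (Y powr (2 / p)) \<le> Qform s \<Omega> u"
proof (rule ennreal_le_of_le_mult_add)
  fix \<delta> :: real assume \<delta>: "0 < \<delta>"
  have \<Omega>_sets [measurable]: "\<Omega> \<in> sets lebesgue" "\<Omega> \<in> sets borel"
    using \<Omega>(2) by auto
  note \<phi>_measurable = Cc_inf_borel_measurable_lebesgue[OF \<phi>]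
  have "ennreal Y < liminf (\<lambda>n. Lp_integral p \<Omega> (\<phi> n))"
    using Y(2) Lp_integral_le_liminf[OF \<phi>_measurable \<Omega>_sets(1) p ae] by simp
  then have "\<forall>\<^sub>F n in sequentially. ennreal Y < Lp_integral p \<Omega> (\<phi> n)"
    by (rule less_LiminfD)
  moreover have "\<forall>\<^sub>F n in sequentially. Qform s \<Omega> (\<phi> n) \<le> ennreal (1 + \<delta>) * Qform s \<Omega> u + ennreal \<delta>"
    by (rule Qform_eventually_le[OF u \<phi>_measurable \<Omega>_sets(2) Q \<delta>])
  ultimately have "\<forall>\<^sub>F n in sequentially.
      m * ennreal (Y powr (2 / p)) \<le> ennreal (1 + \<delta>) * Qform s \<Omega> u + ennreal \<delta>"
  proof eventually_elim
    case (elim n)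
    then have "Lp_integral p \<Omega> (\<phi> n) \<noteq> 0"
      by (metis not_less_zero)
    then have "\<not> (AE x in lebesgue. x \<in> \<Omega> \<longrightarrow> \<phi> n x = 0)"
      using Lp_integral_eq_0_iff[OF \<phi>_measurable \<Omega>_sets(1), of p n] by simp
    moreover obtain M where "\<And>x. \<bar>\<phi> n x\<bar> \<le> M"
      using Cc_inf_bounded[OF \<phi>] by blast
    then have "Lp_integral p \<Omega> (\<phi> n) < \<infinity>"
      using \<Omega> p by (intro Lp_integral_finite) auto
    ultimately have "m * ennreal (Y powr (2 / p)) \<le> Qform s \<Omega> (\<phi> n)"
      using lower[OF \<phi>] elim(1) Y(1) p unfolding p_def by (intro rayleigh_mult_le) auto
    then show ?case using elim(2) by (rule order_trans)
  qed
  then show "m * ennreal (Y powr (2 / p)) \<le> ennreal (1 + \<delta>) * Qform s \<Omega> u + ennreal \<delta>"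
    by (auto dest: eventually_happens)
qed

lemma rayleigh_lower_bound_Hs0:
  fixes u :: "'a::euclidean_space \<Rightarrow> real" and m :: ennreal and s :: real
  defines "p \<equiv> crit_exp DIM('a) s"
  assumes lower: "\<And>\<psi>. Cc_inf \<Omega> \<psi> \<Longrightarrow> \<not> (AE x in lebesgue. x \<in> \<Omega> \<longrightarrow> \<psi> x = 0) \<Longrightarrow> m \<le> rayleigh s \<Omega> \<psi>"
    and u: "u \<in> Hs0 s \<Omega>" "\<not> (AE x in lebesgue. x \<in> \<Omega> \<longrightarrow> u x = 0)"
    and \<Omega>: "bounded \<Omega>" "open \<Omega>" and p: "0 < p"
  shows "m \<le> rayleigh s \<Omega> u"
proof -
  have [measurable]: "\<Omega> \<in> sets lebesgue"
    using \<Omega>(2) by simp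
  have u_measurable: "u \<in> borel_measurable lebesgue"
    using u(1) by (simp add: Hs0_def)
  obtain \<phi> where \<phi>: "\<And>n. Cc_inf \<Omega> (\<phi> n)"
    and L2: "(\<lambda>n. \<integral>\<^sup>+x. ennreal ((\<phi> n x - u x)\<^sup>2) * indicator \<Omega> x \<partial>lebesgue) \<longlonglongrightarrow> 0"
    and Q: "(\<lambda>n. Qform s \<Omega> (\<lambda>x. \<phi> n x - u x)) \<longlonglongrightarrow> 0"
    using Hs0_approximation[OF u(1)] by blast
  obtain r where r: "strict_mono r" "AE x in lebesgue. x \<in> \<Omega> \<longrightarrow> (\<lambda>n. \<phi> (r n) x) \<longlonglongrightarrow> u x"
    using L2_tendsto_imp_AE_subseq[OF Cc_inf_borel_measurable_lebesgue[OF \<phi>] u_measurable _ L2] by auto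
  have "(\<lambda>n. Qform s \<Omega> (\<lambda>x. \<phi> (r n) x - u x)) \<longlonglongrightarrow> 0"
    using LIMSEQ_subseq_LIMSEQ[OF Q r(1)] by (simp add: comp_def)
  note key = rayleigh_lower_bound_approx[OF lower \<phi> u_measurable r(2) this \<Omega> p[unfolded p_def],
      folded p_def]
  have "Lp_integral p \<Omega> u \<noteq> 0"
    using u(2) Lp_integral_eq_0_iff[OF u_measurable, of \<Omega> p] by simp
  show ?thesis
  proof (cases "Lp_integral p \<Omega> u = \<infinity>")
    case True
    \<comment> \<open>then \<open>Lp_norm_sq p \<Omega> u = 0\<close> because \<open>enn2real \<infinity> = 0\<close>, and \<open>Q / 0 \<ge> Q\<close> in \<open>ennreal\<close>\<close>
    then have "m * ennreal (1 powr (2 / p)) \<le> Qform s \<Omega> u"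
      by (intro key) auto
    then show ?thesis
      unfolding rayleigh_def p_def[symmetric] Lp_norm_sq_eq_Lp_integral using True by auto
  next
    case False
    define a where "a = enn2real (Lp_integral p \<Omega> u)"
    have a: "Lp_integral p \<Omega> u = ennreal a" "0 < a"
      using False \<open>Lp_integral p \<Omega> u \<noteq> 0\<close>
      by (auto simp: a_def ennreal_enn2real_if enn2real_positive_iff top.not_eq_extremum
          zero_less_iff_neq_zero)
    have "m * ennreal (a powr (2 / p)) \<le> Qform s \<Omega> u"
      by (rule ennreal_mult_powr_le_of_less[OF a(2)])
         (use a in \<open>auto intro: key simp: ennreal_less_iff\<close>)
    then show ?thesis
      unfolding rayleigh_def p_def[symmetric] Lp_norm_sq_eq_Lp_integral a(1) using a(2)
      by (subst ennreal_le_divide_iff) auto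
  qed
qed

theorem lemma3p3:
  fixes \<Omega> :: "'a::euclidean_space set" and s0 :: real
  assumes "DIM('a) \<ge> 2"
    and "bounded \<Omega>" and "lipschitz_open_set \<Omega>"
    and "1/2 \<le> s0" and "s0 < 1"
  shows "Limsup (at_right s0) (\<lambda>s. S_const s \<Omega>) \<le> S_const s0 \<Omega>"
proof -
  have \<Omega>: "open \<Omega>" and s0: "0 < s0" and p: "0 < crit_exp DIM('a) s0"
    using assms by (auto simp: lipschitz_open_set_def crit_exp_def)
  have Cc: "Limsup (at_right s0) (\<lambda>s. S_const s \<Omega>) \<le> rayleigh s0 \<Omega> \<phi>"
    if "Cc_inf \<Omega> \<phi>" "\<not> (AE x in lebesgue. x \<in> \<Omega> \<longrightarrow> \<phi> x = 0)" for \<phi>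
    by (rule Limsup_S_const_le_rayleigh[OF that assms(2) \<Omega> assms(1) s0 assms(5)])
  have "Limsup (at_right s0) (\<lambda>s. S_const s \<Omega>) \<le> rayleigh s0 \<Omega> u"
    if "u \<in> Hs0 s0 \<Omega>" "\<not> (AE x in lebesgue. x \<in> \<Omega> \<longrightarrow> u x = 0)" for u
    by (rule rayleigh_lower_bound_Hs0[OF Cc that assms(2) \<Omega> p])
  then show ?thesis
    unfolding S_const_def rayleigh_def[symmetric] by (intro INF_greatest) auto
qed

end
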